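(* Let $Q$ be a flat $\mathrm{SYNCSIMPLE}$-process that is must-convergent. Then the process $!0\mid ?0\mid Q$ is also must-convergent.
   Context: $\mathrm{SYNCSIMPLE}$: subprocesses are $\mathcal{U} ::= \checkmark \mid 0 \mid\, !\mathcal{U} \mid\, ?\mathcal{U}$; a process is a finite parallel composition $\mathcal{U}_1\mid\cdots\mid\mathcal{U}_n$, where $\mid$ is associative and commutative and $0$ is a unit. The only reduction step is $!\mathcal{U}_1\mid ?\mathcal{U}_2\mid \mathcal{P}\to \mathcal{U}_1\mid\mathcal{U}_2\mid\mathcal{P}$. A process is successful if it has the form $\checkmark\mid\mathcal{P}$; may-convergent if it reduces in zero or more steps to a successful process; must-convergent if every process reachable from it in zero or more steps is may-convergent. A process is flat if it has the form $A_1\mid\cdots\mid A_n$ where each $A_i$ is one of $!0$, $?0$, $!\checkmark$, $?\checkmark$. *)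

theory Defs
  imports Main "HOL-Library.Multiset"
begin

text \<open>Subprocesses of SYNCSIMPLE: U ::= check | 0 | !U | ?U.\<close>
datatype sub = Tick | Zero | Snd sub | Rcv sub

text \<open>A process U1 | ... | Un is a finite multiset of subprocesses
(parallel composition is associative and commutative; the unit 0 is
represented by the element Zero, which never takes part in a reduction
nor in success, so it is harmless to keep it as an element).\<close>
type_synonym proc = "sub multiset"

inductive step :: "proc \<Rightarrow> proc \<Rightarrow> bool" where
  "step ({#Snd U1, Rcv U2#} + P) ({#U1, U2#} + P)"

definition successful :: "proc \<Rightarrow> bool" where
  "successful P \<longleftrightarrow> (\<exists>P'. P = {#Tick#} + P')"

definition may_conv :: "proc \<Rightarrow> bool" where
  "may_conv P \<longleftrightarrow> (\<exists>P'. step\<^sup>*\<^sup>* P P' \<and> successful P')"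

definition must_conv :: "proc \<Rightarrow> bool" where
  "must_conv P \<longleftrightarrow> (\<forall>P'. step\<^sup>*\<^sup>* P P' \<longrightarrow> may_conv P')"

definition flat :: "proc \<Rightarrow> bool" where
  "flat P \<longleftrightarrow> (\<forall>A \<in># P. A \<in> {Snd Zero, Rcv Zero, Snd Tick, Rcv Tick})"

end

theory Submission
  imports Defs
begin

text \<open>A flat process can only ever reduce a pair of prefixes on 0 or on the success
  symbol, so the whole reduction behaviour is governed by the numbers a, b, c, d of
  components !0, ?0, !check, ?check. Success is reachable from every reduct exactly
  when a success symbol is present, or c > 0 and d > 0, or c > 0 and b > a, or
  d > 0 and a > b: this condition survives every reduction, and when it fails one can
  first pair off all !0 with ?0, after which no reduction can produce a success symbol.
  Adding !0 | ?0 raises a and b by one each and so leaves the condition untouched.\<close>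

definition flat_residual :: "proc \<Rightarrow> bool" where
  "flat_residual P \<longleftrightarrow> (\<forall>A \<in># P. A \<in> {Snd Zero, Rcv Zero, Snd Tick, Rcv Tick, Zero, Tick})"

definition success_inevitable :: "proc \<Rightarrow> bool" where
  "success_inevitable P \<longleftrightarrow> Tick \<in># P \<or>
     (Snd Tick \<in># P \<and> Rcv Tick \<in># P) \<or>
     (Snd Tick \<in># P \<and> count P (Snd Zero) < count P (Rcv Zero)) \<or>
     (Rcv Tick \<in># P \<and> count P (Rcv Zero) < count P (Snd Zero))"

definition tick_blocked :: "proc \<Rightarrow> bool" where
  "tick_blocked P \<longleftrightarrow> Tick \<notin># P \<and>
     \<not> (Snd Tick \<in># P \<and> (Rcv Zero \<in># P \<or> Rcv Tick \<in># P)) \<and>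
     \<not> (Rcv Tick \<in># P \<and> (Snd Zero \<in># P \<or> Snd Tick \<in># P))"

lemma successful_iff_Tick_in: "successful P \<longleftrightarrow> Tick \<in># P"
  unfolding successful_def by (auto dest: multi_member_split)

lemma step_if_in:
  assumes "Snd U1 \<in># P" and "Rcv U2 \<in># P"
  shows "step P ({#U1, U2#} + (P - {#Snd U1, Rcv U2#}))"
proof -
  have "{#Snd U1, Rcv U2#} \<subseteq># P"
    using assms by (auto simp: insert_subset_eq_iff in_diff_count)
  then have "P = {#Snd U1, Rcv U2#} + (P - {#Snd U1, Rcv U2#})"
    by (rule subset_mset.add_diff_inverse[symmetric])
  then show ?thesis
    by (metis step.intros)
qed

lemma may_conv_if_Tick_communication:
  assumes "Snd U1 \<in># P" and "Rcv U2 \<in># P" and "U1 = Tick \<or> U2 = Tick"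
  shows "may_conv P"
proof -
  have "Tick \<in># {#U1, U2#} + (P - {#Snd U1, Rcv U2#})"
    using assms(3) by auto
  then show ?thesis
    using step_if_in[OF assms(1,2)] unfolding may_conv_def successful_iff_Tick_in by blast
qed

lemma step_flat_residualE:
  assumes "step P P'" and "flat_residual P"
  obtains U1 U2 R where "U1 \<in> {Zero, Tick}" and "U2 \<in> {Zero, Tick}"
    and "P = {#Snd U1, Rcv U2#} + R" and "P' = {#U1, U2#} + R"
  using assms unfolding flat_residual_def by (cases rule: step.cases) auto

lemma flat_residual_step: "step P P' \<Longrightarrow> flat_residual P \<Longrightarrow> flat_residual P'"
  by (erule step_flat_residualE) (auto simp: flat_residual_def)

lemma success_inevitable_step:
  assumes "step P P'" and "flat_residual P" and "success_inevitable P"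
  shows "success_inevitable P'"
  using assms(1,2)
proof (rule step_flat_residualE)
  fix U1 U2 R
  assume U: "U1 \<in> {Zero, Tick}" "U2 \<in> {Zero, Tick}"
    and P: "P = {#Snd U1, Rcv U2#} + R" and P': "P' = {#U1, U2#} + R"
  show ?thesis
  proof (cases "U1 = Tick \<or> U2 = Tick")
    case True
    then show ?thesis
      unfolding P' success_inevitable_def by auto
  next
    case False
    with U have "U1 = Zero" "U2 = Zero"
      by auto
    then show ?thesis
      using assms(3) unfolding P P' success_inevitable_def by auto
  qed
qed

lemma success_inevitable_imp_may_conv:
  assumes "success_inevitable P"
  shows "may_conv P"
  using assms unfolding success_inevitable_def
proof (elim disjE conjE)
  assume "Tick \<in># P"
  then show ?thesis
    unfolding may_conv_def successful_iff_Tick_in by blast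
next
  assume "Snd Tick \<in># P" "Rcv Tick \<in># P"
  then show ?thesis
    by (rule may_conv_if_Tick_communication) simp
next
  assume "Snd Tick \<in># P" "count P (Snd Zero) < count P (Rcv Zero)"
  then show ?thesis
    by (intro may_conv_if_Tick_communication[of Tick P Zero]) (auto intro: count_inI)
next
  assume "Rcv Tick \<in># P" "count P (Rcv Zero) < count P (Snd Zero)"
  then show ?thesis
    by (intro may_conv_if_Tick_communication[of Zero P Tick]) (auto intro: count_inI)
qed

lemma tick_blocked_step:
  assumes "step P P'" and "flat_residual P" and "tick_blocked P"
  shows "tick_blocked P'"
  using assms(1,2)
proof (rule step_flat_residualE)
  fix U1 U2 R
  assume U: "U1 \<in> {Zero, Tick}" "U2 \<in> {Zero, Tick}"
    and P: "P = {#Snd U1, Rcv U2#} + R" and P': "P' = {#U1, U2#} + R"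
  from assms(3) U have "U1 = Zero" "U2 = Zero"
    unfolding P tick_blocked_def by auto
  with assms(3) show ?thesis
    unfolding P P' tick_blocked_def by auto
qed

lemma tick_blocked_not_may_conv:
  assumes "flat_residual P" and "tick_blocked P"
  shows "\<not> may_conv P"
proof -
  have "flat_residual P' \<and> tick_blocked P'" if "step\<^sup>*\<^sup>* P P'" for P'
    using that assms
    by (induction rule: rtranclp_induct) (auto intro: flat_residual_step tick_blocked_step)
  then show ?thesis
    unfolding may_conv_def successful_iff_Tick_in tick_blocked_def by blast
qed

lemma must_conv_step: "must_conv P \<Longrightarrow> step P P' \<Longrightarrow> must_conv P'"
  unfolding must_conv_def by (meson converse_rtranclp_into_rtranclp)

lemma must_conv_imp_success_inevitable:
  "flat_residual P \<Longrightarrow> must_conv P \<Longrightarrow> success_inevitable P"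
proof (induction "count P (Snd Zero)" arbitrary: P)
  case 0
  then have "tick_blocked P \<or> success_inevitable P"
    unfolding tick_blocked_def success_inevitable_def by (auto simp: not_in_iff)
  then show ?case
    using 0 tick_blocked_not_may_conv must_conv_def by blast
next
  case (Suc n)
  show ?case
  proof (cases "Rcv Zero \<in># P")
    case True
    have "Snd Zero \<in># P"
      using Suc.hyps(2) by (simp add: count_inI)
    define P' where "P' = {#Zero, Zero#} + (P - {#Snd Zero, Rcv Zero#})"
    have step: "step P P'"
      unfolding P'_def using \<open>Snd Zero \<in># P\<close> True by (rule step_if_in)
    have "n = count P' (Snd Zero)"
      using Suc.hyps(2) by (simp add: P'_def)
    moreover have "flat_residual P'"
      using step Suc.prems(1) by (rule flat_residual_step)
    moreover have "must_conv P'"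
      using Suc.prems(2) step by (rule must_conv_step)
    ultimately have "success_inevitable P'"
      by (rule Suc.hyps(1))
    then show ?thesis
      using True \<open>Snd Zero \<in># P\<close> unfolding P'_def success_inevitable_def
      by (auto simp: in_diff_count)
  next
    case False
    then have "tick_blocked P \<or> success_inevitable P"
      unfolding tick_blocked_def success_inevitable_def
      using Suc.hyps(2) by (auto simp: not_in_iff)
    then show ?thesis
      using Suc.prems tick_blocked_not_may_conv must_conv_def by blast
  qed
qed

lemma success_inevitable_imp_must_conv:
  assumes "flat_residual P" and "success_inevitable P"
  shows "must_conv P"
proof -
  have "flat_residual P' \<and> success_inevitable P'" if "step\<^sup>*\<^sup>* P P'" for P'
    using that assms
    by (induction rule: rtranclp_induct) (auto intro: flat_residual_step success_inevitable_step)
  then show ?thesis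
    unfolding must_conv_def using success_inevitable_imp_may_conv by blast
qed

lemma must_conv_iff_success_inevitable:
  "flat_residual P \<Longrightarrow> must_conv P \<longleftrightarrow> success_inevitable P"
  using must_conv_imp_success_inevitable success_inevitable_imp_must_conv by blast

theorem lemma5p15:
  assumes "flat Q" and "must_conv Q"
  shows "must_conv ({#Snd Zero, Rcv Zero#} + Q)"
proof -
  have residual: "flat_residual Q" "flat_residual ({#Snd Zero, Rcv Zero#} + Q)"
    using assms(1) unfolding flat_def flat_residual_def by auto
  have "success_inevitable Q"
    using assms(2) residual(1) by (simp add: must_conv_iff_success_inevitable)
  then have "success_inevitable ({#Snd Zero, Rcv Zero#} + Q)"
    unfolding success_inevitable_def by auto
  then show ?thesis
    using residual(2) by (simp add: must_conv_iff_success_inevitable)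
qed

end
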